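(* Let $k$ be a positive integer, let $G$ be a multigraph and let $A\subseteq V(G)$ be nonempty. Then there is a set $X\subseteq E(G)$ with $|X|\le (|A|-1)(k-1)$ that $k$-perfectly separates $A$.
   Context: For vertices $u,v$ of a multigraph $H$, $u\sim_k v$ in $H$ means that either $u=v$ or there are $k$ pairwise edge-disjoint $u$--$v$-paths in $H$. $G-X$ denotes $G$ with the edges of $X$ deleted. An edge set $X$ $k$-perfectly separates $A$ if for all $a,a'\in A$ such that $a\not\sim_k a'$ in $G-X$, the vertices $a$ and $a'$ lie in different components of $G-X$. *)

theory Defs
  imports Main
begin

text \<open>A (finite) multigraph is given by a vertex set V, an edge set E and an
endpoint map ends; parallel edges and loops are allowed. The pair ends e is
read as the unordered pair of endpoints of e.\<close>

definition is_multigraph :: "'v set \<Rightarrow> 'e set \<Rightarrow> ('e \<Rightarrow> 'v \<times> 'v) \<Rightarrow> bool" where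
  "is_multigraph V E ends \<longleftrightarrow> finite V \<and> finite E \<and>
     (\<forall>e\<in>E. fst (ends e) \<in> V \<and> snd (ends e) \<in> V)"

definition is_path :: "'v set \<Rightarrow> 'e set \<Rightarrow> ('e \<Rightarrow> 'v \<times> 'v) \<Rightarrow> 'v \<Rightarrow> 'v \<Rightarrow> 'v list \<Rightarrow> 'e list \<Rightarrow> bool" where
  "is_path V F ends u v vs es \<longleftrightarrow>
     length vs = Suc (length es) \<and> hd vs = u \<and> last vs = v \<and> distinct vs \<and> set vs \<subseteq> V \<and>
     (\<forall>i<length es. es ! i \<in> F \<and>
        (ends (es ! i) = (vs ! i, vs ! Suc i) \<or> ends (es ! i) = (vs ! Suc i, vs ! i)))"

definition k_equiv :: "nat \<Rightarrow> 'v set \<Rightarrow> 'e set \<Rightarrow> ('e \<Rightarrow> 'v \<times> 'v) \<Rightarrow> 'v \<Rightarrow> 'v \<Rightarrow> bool" where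
  "k_equiv k V F ends u v \<longleftrightarrow> u = v \<or>
     (\<exists>P :: nat \<Rightarrow> 'v list \<times> 'e list.
        (\<forall>i<k. is_path V F ends u v (fst (P i)) (snd (P i))) \<and>
        (\<forall>i<k. \<forall>j<k. i \<noteq> j \<longrightarrow> set (snd (P i)) \<inter> set (snd (P j)) = {}))"

definition same_component :: "'v set \<Rightarrow> 'e set \<Rightarrow> ('e \<Rightarrow> 'v \<times> 'v) \<Rightarrow> 'v \<Rightarrow> 'v \<Rightarrow> bool" where
  "same_component V F ends u v \<longleftrightarrow> (\<exists>vs es. is_path V F ends u v vs es)"

definition k_perfectly_separates :: "nat \<Rightarrow> 'v set \<Rightarrow> 'e set \<Rightarrow> ('e \<Rightarrow> 'v \<times> 'v) \<Rightarrow> 'e set \<Rightarrow> 'v set \<Rightarrow> bool" where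
  "k_perfectly_separates k V E ends X A \<longleftrightarrow>
     (\<forall>a\<in>A. \<forall>a'\<in>A. \<not> k_equiv k V (E - X) ends a a' \<longrightarrow> \<not> same_component V (E - X) ends a a')"

end

theory Submission
  imports Defs
begin

text \<open>
If some a, a' in A are not k-equivalent, the edge version of Menger's theorem yields a set S
with a in S, a' outside S and fewer than k edges crossing S. Removing these crossing edges,
induction on |A| gives separators X1 of A \<inter> S and X2 of A - S; the crossing edges together
with the edges of X1 inside S and those of X2 outside S separate A, and there are at most
(k - 1) + (|A \<inter> S| - 1)(k - 1) + (|A - S| - 1)(k - 1) = (|A| - 1)(k - 1) of them.

Menger's theorem is proved by induction on |V| + |E|. An edge whose deletion keeps every
s-t cut of size at least k is deleted. If some cut of size exactly k has two vertices on
each side, each side is contracted to a single vertex; the k paths of the two smaller graphs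
all cross this cut, and gluing them along its k edges gives k paths in G. Otherwise every
edge meets s or t, and either a path s-v-t is split off into a single s-t edge, or every
minimum cut consists of parallel s-t edges only.
\<close>

section \<open>Walks and paths\<close>

fun walk :: "'e set \<Rightarrow> ('e \<Rightarrow> 'v \<times> 'v) \<Rightarrow> 'v list \<Rightarrow> 'e list \<Rightarrow> bool" where
  "walk F ends [v] [] = True"
| "walk F ends (u # v # vs) (e # es) =
     (e \<in> F \<and> (ends e = (u, v) \<or> ends e = (v, u)) \<and> walk F ends (v # vs) es)"
| "walk F ends _ _ = False"

lemma walk_iff:
  "walk F ends vs es \<longleftrightarrow> length vs = Suc (length es) \<and>
    (\<forall>i<length es. es ! i \<in> F \<and>
        (ends (es ! i) = (vs ! i, vs ! Suc i) \<or> ends (es ! i) = (vs ! Suc i, vs ! i)))"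
proof (induction F ends vs es rule: walk.induct)
  case (2 F ends u v vs e es)
  then show ?case by (auto simp: All_less_Suc2)
qed auto

lemma is_path_iff:
  "is_path V F ends u v vs es \<longleftrightarrow>
     walk F ends vs es \<and> hd vs = u \<and> last vs = v \<and> distinct vs \<and> set vs \<subseteq> V"
  unfolding is_path_def walk_iff by auto

lemma walk_not_Nil: "walk F ends vs es \<Longrightarrow> vs \<noteq> []"
  by (cases vs) auto

lemma walk_edges: "walk F ends vs es \<Longrightarrow> set es \<subseteq> F"
  by (induction F ends vs es rule: walk.induct) auto

lemma walk_endpoints_mem:
  "walk F ends vs es \<Longrightarrow> e \<in> set es \<Longrightarrow> fst (ends e) \<in> set vs \<and> snd (ends e) \<in> set vs"
  by (induction F ends vs es rule: walk.induct) auto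

lemma walk_mono: "walk F ends vs es \<Longrightarrow> set es \<subseteq> F' \<Longrightarrow> walk F' ends vs es"
  by (induction F ends vs es rule: walk.induct) auto

lemma walk_ends_cong:
  "walk F ends vs es \<Longrightarrow> (\<And>e. e \<in> set es \<Longrightarrow> ends' e = ends e) \<Longrightarrow> walk F ends' vs es"
  by (induction F ends vs es rule: walk.induct) auto

lemma walk_append:
  "walk F ends xs fs \<Longrightarrow> walk F ends (z # zs) gs \<Longrightarrow> e \<in> F \<Longrightarrow>
   ends e = (last xs, z) \<or> ends e = (z, last xs) \<Longrightarrow> walk F ends (xs @ z # zs) (fs @ e # gs)"
  by (induction F ends xs fs rule: walk.induct) auto

lemma walk_rev: "walk F ends vs es \<Longrightarrow> walk F ends (rev vs) (rev es)"
proof (induction F ends vs es rule: walk.induct)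
  case (2 F ends u v vs e es)
  then show ?case
    using walk_append[of F ends "rev vs @ [v]" "rev es" u "[]" "[]" e] by auto
qed auto

lemma walk_stays_in:
  "walk F ends vs es \<Longrightarrow> hd vs \<in> Z \<Longrightarrow>
   \<forall>e\<in>set es. fst (ends e) \<in> Z \<longleftrightarrow> snd (ends e) \<in> Z \<Longrightarrow> set vs \<subseteq> Z"
proof (induction F ends vs es rule: walk.induct)
  case (2 F ends u v vs e es)
  then show ?case by (cases "ends e") auto
qed auto

lemma is_path_rev: "is_path V F ends u v vs es \<Longrightarrow> is_path V F ends v u (rev vs) (rev es)"
  unfolding is_path_iff using walk_not_Nil by (auto simp: walk_rev hd_rev last_rev)

lemma is_path_mono: "is_path V F ends u v vs es \<Longrightarrow> set es \<subseteq> F' \<Longrightarrow> is_path V F' ends u v vs es"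
  unfolding is_path_iff using walk_mono by blast

lemma is_path_Cons_cases:
  assumes "is_path V F ends u v vs es" "u \<noteq> v"
  obtains w ws e fs where "vs = u # w # ws" "es = e # fs" "e \<in> F"
    "ends e = (u, w) \<or> ends e = (w, u)" "is_path V F ends w v (w # ws) fs"
proof -
  have w: "walk F ends vs es" and h: "hd vs = u" "last vs = v" "distinct vs" "set vs \<subseteq> V"
    using assms(1) by (auto simp: is_path_iff)
  have "es \<noteq> []"
  proof
    assume "es = []"
    then obtain x where "vs = [x]" using w by (auto simp: walk_iff length_Suc_conv)
    then show False using h assms(2) by simp
  qed
  then obtain e fs where es: "es = e # fs" by (cases es) auto
  then obtain w ws where "vs = u # w # ws"
    using w h by (cases vs rule: remdups_adj.cases) auto
  then show ?thesis
    using that w h es by (auto simp: is_path_iff)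
qed

lemma is_path_join:
  assumes "is_path V F ends x s xs fs" "is_path V F ends y t ys gs" "set xs \<inter> set ys = {}"
    "c \<in> F" "ends c = (x, y) \<or> ends c = (y, x)"
  shows "is_path V F ends s t (rev xs @ ys) (rev fs @ c # gs)"
proof -
  have rx: "is_path V F ends s x (rev xs) (rev fs)" using is_path_rev[OF assms(1)] .
  obtain ys' where ys: "ys = y # ys'"
    using assms(2) walk_not_Nil by (cases ys) (auto simp: is_path_iff)
  have "walk F ends (rev xs @ y # ys') (rev fs @ c # gs)"
    using walk_append[of F ends "rev xs" "rev fs" y ys' gs c] rx assms(2,4,5) ys
    by (auto simp: is_path_iff)
  then show ?thesis
    using rx assms(2,3) ys walk_not_Nil[of F ends "rev xs" "rev fs"] by (auto simp: is_path_iff)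
qed

section \<open>Edge cuts and Menger's theorem\<close>

definition cut_edges :: "'e set \<Rightarrow> ('e \<Rightarrow> 'v \<times> 'v) \<Rightarrow> 'v set \<Rightarrow> 'e set" where
  "cut_edges F ends S = {e\<in>F. (fst (ends e) \<in> S) \<noteq> (snd (ends e) \<in> S)}"

definition inner_edges :: "('e \<Rightarrow> 'v \<times> 'v) \<Rightarrow> 'v set \<Rightarrow> 'e set" where
  "inner_edges ends S = {e. fst (ends e) \<in> S \<and> snd (ends e) \<in> S}"

definition min_cut_ge :: "nat \<Rightarrow> 'e set \<Rightarrow> ('e \<Rightarrow> 'v \<times> 'v) \<Rightarrow> 'v \<Rightarrow> 'v \<Rightarrow> bool" where
  "min_cut_ge k F ends s t \<longleftrightarrow> (\<forall>S. s \<in> S \<longrightarrow> t \<notin> S \<longrightarrow> k \<le> card (cut_edges F ends S))"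

definition edge_disjoint_paths ::
    "nat \<Rightarrow> 'v set \<Rightarrow> 'e set \<Rightarrow> ('e \<Rightarrow> 'v \<times> 'v) \<Rightarrow> 'v \<Rightarrow> 'v \<Rightarrow> (nat \<Rightarrow> 'v list \<times> 'e list) \<Rightarrow> bool"
  where
  "edge_disjoint_paths k V F ends s t P \<longleftrightarrow>
     (\<forall>i<k. is_path V F ends s t (fst (P i)) (snd (P i))) \<and>
     (\<forall>i<k. \<forall>j<k. i \<noteq> j \<longrightarrow> set (snd (P i)) \<inter> set (snd (P j)) = {})"

lemma k_equiv_iff: "k_equiv k V F ends u v \<longleftrightarrow> u = v \<or> (\<exists>P. edge_disjoint_paths k V F ends u v P)"
  unfolding k_equiv_def edge_disjoint_paths_def ..

lemma edge_disjoint_paths_mono: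
  "edge_disjoint_paths k V F ends s t P \<Longrightarrow> F \<subseteq> F' \<Longrightarrow> edge_disjoint_paths k V F' ends s t P"
  unfolding edge_disjoint_paths_def is_path_iff using walk_mono walk_edges by (meson order_trans)

lemma cut_edges_Compl [simp]: "cut_edges F ends (- S) = cut_edges F ends S"
  by (auto simp: cut_edges_def)

lemma cut_edges_Diff: "cut_edges (F - X) ends S = cut_edges F ends S - X"
  by (auto simp: cut_edges_def)

lemma min_cut_ge_sym: "min_cut_ge k F ends s t \<longleftrightarrow> min_cut_ge k F ends t s"
  unfolding min_cut_ge_def by (metis Compl_iff cut_edges_Compl)

definition collapse :: "'v set \<Rightarrow> 'v \<Rightarrow> 'v \<Rightarrow> 'v" where
  "collapse S t v = (if v \<in> S then v else t)"

definition collapse_ends :: "'v set \<Rightarrow> 'v \<Rightarrow> ('e \<Rightarrow> 'v \<times> 'v) \<Rightarrow> 'e \<Rightarrow> 'v \<times> 'v" where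
  "collapse_ends S t ends e = map_prod (collapse S t) (collapse S t) (ends e)"

lemma is_multigraph_collapse:
  "is_multigraph V E ends \<Longrightarrow> is_multigraph (collapse S t ` V) E (collapse_ends S t ends)"
  by (auto simp: is_multigraph_def collapse_ends_def)

lemma card_collapse_less:
  assumes "finite V" "t \<in> V" "y \<in> V - S" "y \<noteq> t"
  shows "card (collapse S t ` V) < card V"
proof -
  have "\<not> inj_on (collapse S t) V"
    using assms by (auto simp: inj_on_def collapse_def)
  then show ?thesis
    using assms(1) card_image_le[of V "collapse S t"] eq_card_imp_inj_on[of V "collapse S t"]
    by linarith
qed

lemma cut_edges_collapse:
  "t \<notin> T \<Longrightarrow> cut_edges E (collapse_ends S t ends) T = cut_edges E ends (T \<inter> S)"
  by (auto simp: cut_edges_def collapse_ends_def collapse_def)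

lemma min_cut_ge_collapse: "min_cut_ge k E ends s t \<Longrightarrow> s \<in> S \<Longrightarrow> min_cut_ge k E (collapse_ends S t ends) s t"
  unfolding min_cut_ge_def by (simp add: cut_edges_collapse)

lemma collapse_smaller_instance:
  assumes mg: "is_multigraph V E ends" and cuts: "min_cut_ge k E ends s t"
    and "s \<in> V" "t \<in> V" "s \<in> S" and y: "y \<in> V - S" "y \<noteq> t"
  shows "is_multigraph (collapse S t ` V) E (collapse_ends S t ends)"
    and "t \<in> collapse S t ` V" "s \<in> collapse S t ` V"
    and "card (collapse S t ` V) < card V"
    and "min_cut_ge k E (collapse_ends S t ends) t s"
proof -
  show "is_multigraph (collapse S t ` V) E (collapse_ends S t ends)"
    by (rule is_multigraph_collapse[OF mg])
  have "collapse S t t = t" "collapse S t s = s" using \<open>s \<in> S\<close> by (simp_all add: collapse_def)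
  then show "t \<in> collapse S t ` V" "s \<in> collapse S t ` V"
    using \<open>s \<in> V\<close> \<open>t \<in> V\<close> by (metis image_eqI)+
  show "card (collapse S t ` V) < card V"
    using mg card_collapse_less[OF _ \<open>t \<in> V\<close> y] by (simp add: is_multigraph_def)
  show "min_cut_ge k E (collapse_ends S t ends) t s"
    using min_cut_ge_sym[THEN iffD1, OF min_cut_ge_collapse[OF cuts \<open>s \<in> S\<close>]] .
qed

lemma walk_of_collapse:
  "walk F (collapse_ends S t ends) vs es \<Longrightarrow> set vs \<subseteq> S \<Longrightarrow> t \<notin> S \<Longrightarrow> walk F ends vs es"
proof (induction F "collapse_ends S t ends" vs es rule: walk.induct)
  case (2 F u v vs e es)
  then show ?case by (cases "ends e") (auto simp: collapse_ends_def collapse_def split: if_splits)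
qed auto

lemma collapsed_path_split:
  assumes p: "is_path (collapse S t ` V) E (collapse_ends S t ends) t s vs es"
    and "s \<in> S" "t \<notin> S"
  shows "is_path V E ends (hd (tl vs)) s (tl vs) (tl es) \<and> set (tl vs) \<subseteq> S \<and>
    set (tl es) \<subseteq> inner_edges ends S \<and> es = hd es # tl es \<and> hd es \<in> cut_edges E ends S \<and>
    hd (tl vs) \<in> {fst (ends (hd es)), snd (ends (hd es))}"
proof -
  have "t \<noteq> s" using assms by auto
  with p obtain w ws c fs where vs: "vs = t # w # ws" and es: "es = c # fs" and c: "c \<in> E"
    "collapse_ends S t ends c = (t, w) \<or> collapse_ends S t ends c = (w, t)"
    and q: "is_path (collapse S t ` V) E (collapse_ends S t ends) w s (w # ws) fs"
    by (rule is_path_Cons_cases)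
  have inS: "set (w # ws) \<subseteq> S \<inter> V"
  proof
    fix x assume x: "x \<in> set (w # ws)"
    then have "x \<noteq> t" "x \<in> collapse S t ` V"
      using p q vs by (auto simp: is_path_iff)
    then show "x \<in> S \<inter> V" by (auto simp: collapse_def)
  qed
  have "walk E ends (w # ws) fs"
    using q inS assms(3) walk_of_collapse by (fastforce simp: is_path_iff)
  then have path: "is_path V E ends w s (w # ws) fs"
    using q inS by (auto simp: is_path_iff)
  moreover have "set fs \<subseteq> inner_edges ends S"
    using walk_endpoints_mem path inS by (fastforce simp: is_path_iff inner_edges_def)
  moreover have "c \<in> cut_edges E ends S \<and> w \<in> {fst (ends c), snd (ends c)}"
    using c inS assms(3)
    by (cases "ends c") (auto simp: cut_edges_def collapse_ends_def collapse_def split: if_splits)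
  ultimately show ?thesis using vs es inS by auto
qed

lemma is_path_across_cut:
  assumes p: "is_path V E ends x s xs fs" "set xs \<subseteq> S"
    and q: "is_path V E ends y t ys gs" "set ys \<subseteq> - S"
    and c: "c \<in> cut_edges E ends S" "x \<in> {fst (ends c), snd (ends c)}" "y \<in> {fst (ends c), snd (ends c)}"
  shows "is_path V E ends s t (rev xs @ ys) (rev fs @ c # gs)"
proof (rule is_path_join[OF p(1) q(1)])
  have "xs \<noteq> []" "ys \<noteq> []" "hd xs = x" "hd ys = y"
    using p(1) q(1) walk_not_Nil unfolding is_path_iff by blast+
  then have "x \<in> S" "y \<notin> S" using p(2) q(2) hd_in_set by blast+
  then show "ends c = (x, y) \<or> ends c = (y, x)"
    using c by (cases "ends c") (auto simp: cut_edges_def)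
  show "set xs \<inter> set ys = {}" using p(2) q(2) by blast
  show "c \<in> E" using c(1) by (simp add: cut_edges_def)
qed

lemma bij_betw_edge_choice:
  assumes "edge_disjoint_paths k V F ends s t P" "\<forall>i<k. c i \<in> set (snd (P i)) \<inter> C"
    "finite C" "card C = k"
  shows "bij_betw c {..<k} C"
proof -
  have inj: "inj_on c {..<k}"
  proof (rule inj_onI)
    fix i j assume ij: "i \<in> {..<k}" "j \<in> {..<k}" "c i = c j"
    show "i = j"
    proof (rule ccontr)
      assume "i \<noteq> j"
      then have "set (snd (P i)) \<inter> set (snd (P j)) = {}"
        using assms(1) ij by (simp add: edge_disjoint_paths_def)
      then show False using assms(2) ij by auto
    qed
  qed
  moreover have "c ` {..<k} = C"
    using card_subset_eq[OF assms(3), of "c ` {..<k}"] card_image[OF inj] assms(2,4) by auto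
  ultimately show ?thesis by (simp add: bij_betw_def)
qed

lemma edge_choice_matching:
  assumes "edge_disjoint_paths k V F ends s t P" "\<forall>i<k. c i \<in> set (snd (P i)) \<inter> C"
    and "edge_disjoint_paths k V' F' ends' s' t' Q" "\<forall>j<k. d j \<in> set (snd (Q j)) \<inter> C"
    and "finite C" "card C = k"
  obtains \<sigma> where "bij_betw \<sigma> {..<k} {..<k}" "\<And>i. i < k \<Longrightarrow> d (\<sigma> i) = c i"
proof
  have bc: "bij_betw c {..<k} C" and bd: "bij_betw d {..<k} C"
    using bij_betw_edge_choice[OF assms(1,2,5,6)] bij_betw_edge_choice[OF assms(3,4,5,6)] .
  show "bij_betw (inv_into {..<k} d \<circ> c) {..<k} {..<k}"
    using bc bd by (meson bij_betw_inv_into bij_betw_trans)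
  show "d ((inv_into {..<k} d \<circ> c) i) = c i" if "i < k" for i
    using bij_betw_inv_into_right[OF bd] bij_betw_apply[OF bc] that by auto
qed

text \<open>If the cut of S is tight, every cut edge is the first edge of exactly one path on
either side, which matches up the paths of the two collapsed graphs.\<close>

lemma paths_across_tight_cut:
  assumes "finite E" "s \<in> S" "t \<notin> S" "card (cut_edges E ends S) = k"
    and P: "edge_disjoint_paths k (collapse S t ` V) E (collapse_ends S t ends) t s P"
    and Q: "edge_disjoint_paths k (collapse (- S) s ` V) E (collapse_ends (- S) s ends) s t Q"
  shows "\<exists>R. edge_disjoint_paths k V E ends s t R"
proof -
  define x f c where "x i = tl (fst (P i))" "f i = tl (snd (P i))" "c i = hd (snd (P i))" for i
  define y g d where "y j = tl (fst (Q j))" "g j = tl (snd (Q j))" "d j = hd (snd (Q j))" for j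
  have Pi: "is_path V E ends (hd (x i)) s (x i) (f i) \<and> set (x i) \<subseteq> S \<and>
      set (f i) \<subseteq> inner_edges ends S \<and> snd (P i) = c i # f i \<and> c i \<in> cut_edges E ends S \<and>
      hd (x i) \<in> {fst (ends (c i)), snd (ends (c i))}" if "i < k" for i
    using collapsed_path_split[of S t V E ends s "fst (P i)" "snd (P i)"] P that assms(2,3)
    unfolding x_f_c_def edge_disjoint_paths_def by auto
  have Qj: "is_path V E ends (hd (y j)) t (y j) (g j) \<and> set (y j) \<subseteq> - S \<and>
      set (g j) \<subseteq> inner_edges ends (- S) \<and> snd (Q j) = d j # g j \<and> d j \<in> cut_edges E ends S \<and>
      hd (y j) \<in> {fst (ends (d j)), snd (ends (d j))}" if "j < k" for j
    using collapsed_path_split[of "- S" s V E ends t "fst (Q j)" "snd (Q j)"] Q that assms(2,3)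
    unfolding y_g_d_def edge_disjoint_paths_def by auto
  have fin: "finite (cut_edges E ends S)" using assms(1) by (simp add: cut_edges_def)
  have c: "\<forall>i<k. c i \<in> set (snd (P i)) \<inter> cut_edges E ends S"
    and d: "\<forall>j<k. d j \<in> set (snd (Q j)) \<inter> cut_edges E ends S"
    using Pi Qj by (metis IntI list.set_intros(1))+
  obtain \<sigma> where \<sigma>: "bij_betw \<sigma> {..<k} {..<k}" and d\<sigma>: "\<And>i. i < k \<Longrightarrow> d (\<sigma> i) = c i"
    using edge_choice_matching[OF P c Q d fin assms(4)] by blast
  have \<sigma>k: "\<sigma> i < k" if "i < k" for i using bij_betw_apply[OF \<sigma>] that by auto
  define R where "R i = (rev (x i) @ y (\<sigma> i), rev (f i) @ c i # g (\<sigma> i))" for i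
  have "is_path V E ends s t (fst (R i)) (snd (R i))" if "i < k" for i
    using is_path_across_cut[of V E ends "hd (x i)" s "x i" "f i" S "hd (y (\<sigma> i))" t "y (\<sigma> i)"
        "g (\<sigma> i)" "c i"] Pi[OF that] Qj[OF \<sigma>k[OF that]] d\<sigma>[OF that]
    unfolding R_def by simp
  moreover have "set (snd (R i)) \<inter> set (snd (R j)) = {}" if "i < k" "j < k" "i \<noteq> j" for i j
  proof -
    note p = Pi[OF that(1)] Pi[OF that(2)] and q = Qj[OF \<sigma>k[OF that(1)]] Qj[OF \<sigma>k[OF that(2)]]
    have "set (snd (P i)) \<inter> set (snd (P j)) = {}"
      using P that unfolding edge_disjoint_paths_def by simp
    then have "set (f i) \<inter> set (f j) = {}" "c i \<noteq> c j" using p by auto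
    moreover have "\<sigma> i \<noteq> \<sigma> j" using bij_betw_imp_inj_on[OF \<sigma>] that by (simp add: inj_on_eq_iff)
    then have "set (snd (Q (\<sigma> i))) \<inter> set (snd (Q (\<sigma> j))) = {}"
      using Q \<sigma>k that unfolding edge_disjoint_paths_def by simp
    then have "set (g (\<sigma> i)) \<inter> set (g (\<sigma> j)) = {}" using q by auto
    moreover have "inner_edges ends S \<inter> inner_edges ends (- S) = {}"
      "cut_edges E ends S \<inter> inner_edges ends S = {}" "cut_edges E ends S \<inter> inner_edges ends (- S) = {}"
      by (auto simp: inner_edges_def cut_edges_def)
    moreover have "set (f i) \<union> set (f j) \<subseteq> inner_edges ends S"
      "set (g (\<sigma> i)) \<union> set (g (\<sigma> j)) \<subseteq> inner_edges ends (- S)"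
      "c i \<in> cut_edges E ends S" "c j \<in> cut_edges E ends S"
      using p q by blast+
    ultimately show ?thesis
      unfolding R_def set_append set_rev list.set snd_conv by blast
  qed
  ultimately show ?thesis unfolding edge_disjoint_paths_def by blast
qed

lemma min_cut_ge_split_off:
  assumes cuts: "min_cut_ge k E ends s t" and "finite E" "s \<noteq> t" "a \<in> E" "b \<in> E"
    and a: "ends a = (s, v) \<or> ends a = (v, s)" and b: "ends b = (v, t) \<or> ends b = (t, v)"
  shows "min_cut_ge k (E - {b}) (ends(a := (s, t))) s t"
  unfolding min_cut_ge_def
proof (intro allI impI)
  fix T assume T: "s \<in> T" "t \<notin> T"
  define C C' where "C = cut_edges E ends T" "C' = cut_edges (E - {b}) (ends(a := (s, t))) T"
  have "a \<noteq> b" using a b assms(3) by auto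
  then have finC: "finite C" "finite C'" and aC': "a \<in> C'" and sub: "C - {a, b} \<subseteq> C'"
    using assms(2,4) T unfolding C_C'_def cut_edges_def by auto
  have "card C \<le> card C'"
  proof (cases "b \<in> C")
    case False
    then show ?thesis using finC sub aC' by (intro card_mono) auto
  next
    case True
    then have "a \<notin> C" using a b T unfolding C_C'_def cut_edges_def by auto
    then have "card (C - {b}) \<le> card (C' - {a})" using sub finC by (intro card_mono) auto
    moreover have "0 < card C" "0 < card C'" using finC True aC' card_gt_0_iff by blast+
    ultimately show ?thesis using finC True aC' by (simp add: card_Diff_singleton)
  qed
  then show "k \<le> card C'" using cuts T unfolding min_cut_ge_def C_C'_def by fastforce
qed

lemma edge_disjoint_paths_split_off:
  assumes P: "edge_disjoint_paths k V (E - {b}) (ends(a := (s, t))) s t P"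
    and "a \<in> E" "b \<in> E" "s \<in> V" "t \<in> V" "v \<in> V" "s \<noteq> t" "v \<noteq> s" "v \<noteq> t"
    and a: "ends a = (s, v) \<or> ends a = (v, s)" and b: "ends b = (v, t) \<or> ends b = (t, v)"
  shows "\<exists>R. edge_disjoint_paths k V E ends s t R"
proof -
  define R where "R i = (if a \<in> set (snd (P i)) then ([s, v, t], [a, b]) else P i)" for i
  have Pi: "is_path V (E - {b}) (ends(a := (s, t))) s t (fst (P i)) (snd (P i))" if "i < k" for i
    using P that by (simp add: edge_disjoint_paths_def)
  have "is_path V E ends s t (fst (R i)) (snd (R i))" if "i < k" for i
  proof (cases "a \<in> set (snd (P i))")
    case True
    then show ?thesis unfolding R_def is_path_iff using assms by auto
  next
    case False
    have "walk (E - {b}) (ends(a := (s, t))) (fst (P i)) (snd (P i))"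
      using Pi[OF that] by (simp add: is_path_iff)
    then have "walk (E - {b}) ends (fst (P i)) (snd (P i))"
      by (rule walk_ends_cong) (use False in auto)
    then have "walk E ends (fst (P i)) (snd (P i))"
      using walk_mono walk_edges by blast
    then show ?thesis using Pi[OF that] False unfolding R_def is_path_iff by auto
  qed
  moreover have "set (snd (R i)) \<inter> set (snd (R j)) = {}" if "i < k" "j < k" "i \<noteq> j" for i j
  proof -
    have "b \<notin> set (snd (P i))" "b \<notin> set (snd (P j))"
      using Pi that walk_edges unfolding is_path_iff by blast+
    moreover have "set (snd (P i)) \<inter> set (snd (P j)) = {}"
      using P that by (simp add: edge_disjoint_paths_def)
    ultimately show ?thesis unfolding R_def by auto
  qed
  ultimately show ?thesis unfolding edge_disjoint_paths_def by blast
qed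

lemma edge_disjoint_paths_of_parallel_edges:
  assumes "finite E" "s \<in> V" "t \<in> V" "s \<noteq> t"
    and "k \<le> card {e\<in>E. ends e = (s, t) \<or> ends e = (t, s)}"
  shows "\<exists>R. edge_disjoint_paths k V E ends s t R"
proof -
  obtain es where es: "set es = {e\<in>E. ends e = (s, t) \<or> ends e = (t, s)}" "distinct es"
    using finite_distinct_list[of "{e\<in>E. ends e = (s, t) \<or> ends e = (t, s)}"] assms(1) by auto
  then have "k \<le> length es" using assms(5) distinct_card by fastforce
  then have "edge_disjoint_paths k V E ends s t (\<lambda>i. ([s, t], [es ! i]))"
    using es assms(2-4) nth_mem[of _ es]
    by (auto simp: edge_disjoint_paths_def is_path_iff nth_eq_iff_index_eq)
  then show ?thesis by blast
qed

text \<open>The edges leaving s together with its neighbours other than t are direct s-t edges.\<close>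

lemma card_parallel_edges_ge:
  assumes cuts: "min_cut_ge k E ends s t" and "finite E" "t \<noteq> s"
    and touch: "\<forall>e\<in>E. fst (ends e) \<in> {s, t} \<or> snd (ends e) \<in> {s, t}"
    and no_detour: "\<nexists>v a b. v \<noteq> s \<and> v \<noteq> t \<and> a \<in> E \<and> b \<in> E \<and>
      (ends a = (s, v) \<or> ends a = (v, s)) \<and> (ends b = (v, t) \<or> ends b = (t, v))"
  shows "k \<le> card {e\<in>E. ends e = (s, t) \<or> ends e = (t, s)}"
proof -
  define N where "N = {v. v \<noteq> t \<and> (\<exists>e\<in>E. ends e = (s, v) \<or> ends e = (v, s))}"
  have "cut_edges E ends (insert s N) \<subseteq> {e\<in>E. ends e = (s, t) \<or> ends e = (t, s)}"
  proof
    fix e assume e: "e \<in> cut_edges E ends (insert s N)"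
    obtain p q where pq: "ends e = (p, q)" by (cases "ends e")
    have "e \<in> E" "(p \<in> insert s N) \<noteq> (q \<in> insert s N)" using e pq by (auto simp: cut_edges_def)
    moreover have "p \<in> {s, t} \<or> q \<in> {s, t}" using touch \<open>e \<in> E\<close> pq by fastforce
    ultimately show "e \<in> {e\<in>E. ends e = (s, t) \<or> ends e = (t, s)}"
      using pq no_detour unfolding N_def by auto
  qed
  moreover have "finite {e\<in>E. ends e = (s, t) \<or> ends e = (t, s)}" using assms(2) by simp
  moreover have "k \<le> card (cut_edges E ends (insert s N))"
    using cuts assms(3) unfolding min_cut_ge_def N_def by simp
  ultimately show ?thesis using card_mono order_trans by blast
qed

lemma critical_edge_at_terminal:
  assumes mg: "is_multigraph V E ends" and cuts: "min_cut_ge k E ends s t"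
    and e: "e \<in> E" and critical: "\<not> min_cut_ge k (E - {e}) ends s t"
    and no_tight_cut: "\<nexists>S. s \<in> S \<and> t \<notin> S \<and> card (cut_edges E ends S) = k \<and>
      (\<exists>y\<in>V - S. y \<noteq> t) \<and> (\<exists>x\<in>V \<inter> S. x \<noteq> s)"
  shows "fst (ends e) \<in> {s, t} \<or> snd (ends e) \<in> {s, t}"
proof -
  obtain T where T: "s \<in> T" "t \<notin> T" "card (cut_edges E ends T - {e}) < k"
    using critical by (auto simp: min_cut_ge_def cut_edges_Diff not_le)
  have fin: "finite (cut_edges E ends T)" and endsV: "fst (ends e) \<in> V" "snd (ends e) \<in> V"
    using mg e by (auto simp: is_multigraph_def cut_edges_def)
  have k: "k \<le> card (cut_edges E ends T)" using cuts T by (simp add: min_cut_ge_def)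
  then have "e \<in> cut_edges E ends T" using T(3) by (metis Diff_empty Diff_insert0 not_le)
  moreover from this have "card (cut_edges E ends T) = k"
    using k T(3) fin card_gt_0_iff[of "cut_edges E ends T"] by (simp add: card_Diff_singleton)
  ultimately show ?thesis
    using no_tight_cut T endsV by (auto simp: cut_edges_def)
qed

theorem menger_edge:
  fixes V :: "'v set" and E :: "'e set"
  assumes "is_multigraph V E ends" "s \<in> V" "t \<in> V" "s \<noteq> t" "min_cut_ge k E ends s t"
  shows "\<exists>P. edge_disjoint_paths k V E ends s t P"
  using assms
proof (induction "card V + card E" arbitrary: V E ends s t rule: less_induct)
  case less
  have fin: "finite V" "finite E" using less.prems(1) by (auto simp: is_multigraph_def)
  have IH: "\<exists>P. edge_disjoint_paths k V' E' ends' s' t' P"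
    if "card V' + card E' < card V + card E" "is_multigraph V' E' ends'" "s' \<in> V'" "t' \<in> V'"
      "s' \<noteq> t'" "min_cut_ge k E' ends' s' t'" for V' :: "'v set" and E' :: "'e set" and ends' s' t'
    by (rule less.hyps[OF that])
  show ?case
  proof (cases "\<exists>e\<in>E. min_cut_ge k (E - {e}) ends s t")
    case True
    then obtain e where e: "e \<in> E" "min_cut_ge k (E - {e}) ends s t" by blast
    have "is_multigraph V (E - {e}) ends" using less.prems(1) by (auto simp: is_multigraph_def)
    moreover have "card V + card (E - {e}) < card V + card E"
      using card_Diff1_less[OF fin(2) e(1)] by simp
    ultimately obtain P where "edge_disjoint_paths k V (E - {e}) ends s t P"
      using IH[OF _ _ less.prems(2-4) e(2)] by blast
    then show ?thesis using edge_disjoint_paths_mono[of k V "E - {e}" ends s t P E] by blast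
  next
    case no_deletable: False
    show ?thesis
    proof (cases "\<exists>S. s \<in> S \<and> t \<notin> S \<and> card (cut_edges E ends S) = k \<and>
        (\<exists>y\<in>V - S. y \<noteq> t) \<and> (\<exists>x\<in>V \<inter> S. x \<noteq> s)")
      case True
      then obtain S y x where S: "s \<in> S" "t \<notin> S" "card (cut_edges E ends S) = k"
        and y: "y \<in> V - S" "y \<noteq> t" and x: "x \<in> V \<inter> S" "x \<noteq> s" by blast
      have "t \<in> - S" "x \<in> V - - S" using S(2) x(1) by auto
      note small = collapse_smaller_instance[OF less.prems(1,5,2,3) S(1) y]
        collapse_smaller_instance[OF less.prems(1) min_cut_ge_sym[THEN iffD1, OF less.prems(5)]
          less.prems(3,2) \<open>t \<in> - S\<close> \<open>x \<in> V - - S\<close> x(2)]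
      have "\<exists>P. edge_disjoint_paths k (collapse S t ` V) E (collapse_ends S t ends) t s P"
        by (rule IH[OF _ small(1-3) less.prems(4)[symmetric] small(5)]) (use small(4) in simp)
      moreover have "\<exists>Q. edge_disjoint_paths k (collapse (- S) s ` V) E (collapse_ends (- S) s ends) s t Q"
        by (rule IH[OF _ small(6-8) less.prems(4) small(10)]) (use small(9) in simp)
      ultimately obtain P Q where PQ:
        "edge_disjoint_paths k (collapse S t ` V) E (collapse_ends S t ends) t s P"
        "edge_disjoint_paths k (collapse (- S) s ` V) E (collapse_ends (- S) s ends) s t Q"
        by blast
      show ?thesis by (rule paths_across_tight_cut[OF fin(2) S PQ])
    next
      case no_tight_cut: False
      have touch: "\<forall>e\<in>E. fst (ends e) \<in> {s, t} \<or> snd (ends e) \<in> {s, t}"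
      proof
        fix e assume "e \<in> E"
        then show "fst (ends e) \<in> {s, t} \<or> snd (ends e) \<in> {s, t}"
          using critical_edge_at_terminal[OF less.prems(1,5) _ _ no_tight_cut] no_deletable
          by blast
      qed
      show ?thesis
      proof (cases "\<exists>v a b. v \<noteq> s \<and> v \<noteq> t \<and> a \<in> E \<and> b \<in> E \<and>
          (ends a = (s, v) \<or> ends a = (v, s)) \<and> (ends b = (v, t) \<or> ends b = (t, v))")
        case True
        then obtain v a b where v: "v \<noteq> s" "v \<noteq> t" "a \<in> E" "b \<in> E"
          and a: "ends a = (s, v) \<or> ends a = (v, s)" and b: "ends b = (v, t) \<or> ends b = (t, v)"
          by blast
        have "v \<in> V" using less.prems(1) v(3) a by (auto simp: is_multigraph_def)
        have "is_multigraph V (E - {b}) (ends(a := (s, t)))"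
          using less.prems(1-3) by (auto simp: is_multigraph_def)
        moreover have "card V + card (E - {b}) < card V + card E"
          using card_Diff1_less[OF fin(2) v(4)] by simp
        ultimately obtain P where "edge_disjoint_paths k V (E - {b}) (ends(a := (s, t))) s t P"
          using IH[OF _ _ less.prems(2-4) min_cut_ge_split_off[OF less.prems(5) fin(2) less.prems(4) v(3,4) a b]]
          by blast
        then show ?thesis
          by (rule edge_disjoint_paths_split_off[OF _ v(3,4) less.prems(2,3) \<open>v \<in> V\<close> less.prems(4) v(1,2) a b])
      next
        case False
        then have "k \<le> card {e\<in>E. ends e = (s, t) \<or> ends e = (t, s)}"
          using card_parallel_edges_ge[OF less.prems(5) fin(2) _ touch] less.prems(4) by blast
        then show ?thesis
          by (rule edge_disjoint_paths_of_parallel_edges[OF fin(2) less.prems(2-4)])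
      qed
    qed
  qed
qed

section \<open>Perfect separation\<close>

lemma small_cut_if_not_k_equiv:
  assumes "is_multigraph V E ends" "a \<in> V" "a' \<in> V" "\<not> k_equiv k V E ends a a'"
  obtains S where "a \<in> S" "a' \<notin> S" "card (cut_edges E ends S) < k"
proof -
  have "\<not> min_cut_ge k E ends a a'"
    using menger_edge[OF assms(1-3)] assms(4) by (auto simp: k_equiv_iff)
  then show ?thesis using that by (auto simp: min_cut_ge_def not_le)
qed

lemma walk_avoiding_cut_stays_inside:
  assumes "walk F ends vs es" "hd vs \<in> Z" "cut_edges F ends Z = {}"
  shows "set vs \<subseteq> Z" "set es \<subseteq> inner_edges ends Z"
proof -
  have "\<forall>e\<in>set es. fst (ends e) \<in> Z \<longleftrightarrow> snd (ends e) \<in> Z"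
    using walk_edges[OF assms(1)] assms(3) by (auto simp: cut_edges_def)
  then show "set vs \<subseteq> Z" using walk_stays_in[OF assms(1,2)] by blast
  then show "set es \<subseteq> inner_edges ends Z"
    using walk_endpoints_mem[OF assms(1)] by (auto simp: inner_edges_def)
qed

lemma k_equiv_mono:
  assumes "k_equiv k V F ends u v"
    and mono: "\<And>vs es. is_path V F ends u v vs es \<Longrightarrow> set es \<subseteq> F'"
  shows "k_equiv k V F' ends u v"
proof (cases "u = v")
  case False
  then obtain P where P: "edge_disjoint_paths k V F ends u v P"
    using assms(1) by (auto simp: k_equiv_iff)
  have "is_path V F' ends u v (fst (P i)) (snd (P i))" if "i < k" for i
  proof -
    have "is_path V F ends u v (fst (P i)) (snd (P i))"
      using P that by (simp add: edge_disjoint_paths_def)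
    then show ?thesis using is_path_mono mono by metis
  qed
  then have "edge_disjoint_paths k V F' ends u v P"
    using P by (simp add: edge_disjoint_paths_def)
  then show ?thesis by (auto simp: k_equiv_iff)
qed (simp add: k_equiv_def)

text \<open>Once the cut edges of Z are gone, paths starting in Z stay inside Z, where Y and X
remove the same edges.\<close>

lemma k_equiv_within_side:
  assumes cut: "cut_edges F ends Z \<subseteq> Y"
    and inner: "Y \<inter> inner_edges ends Z = X \<inter> inner_edges ends Z"
    and sep: "k_perfectly_separates k V (F - cut_edges F ends Z) ends X (A \<inter> Z)"
    and "b \<in> A \<inter> Z" "b' \<in> A" and conn: "same_component V (F - Y) ends b b'"
  shows "k_equiv k V (F - Y) ends b b'"
proof -
  obtain vs es where p: "is_path V (F - Y) ends b b' vs es"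
    using conn unfolding same_component_def by blast
  have w: "walk (F - Y) ends vs es" "hd vs \<in> Z" using p \<open>b \<in> A \<inter> Z\<close> by (auto simp: is_path_iff)
  moreover have "cut_edges (F - Y) ends Z = {}" using cut by (auto simp: cut_edges_Diff)
  ultimately have "set vs \<subseteq> Z" "set es \<subseteq> inner_edges ends Z"
    by (rule walk_avoiding_cut_stays_inside)+
  moreover have "vs \<noteq> []" using walk_not_Nil[OF w(1)] .
  ultimately have "b' \<in> A \<inter> Z" using p \<open>b' \<in> A\<close> by (auto simp: is_path_iff)
  have "set es \<subseteq> F - Y" using walk_edges[OF w(1)] .
  then have "set es \<subseteq> F - cut_edges F ends Z - X"
    using cut inner \<open>set es \<subseteq> inner_edges ends Z\<close> by blast
  then have "same_component V (F - cut_edges F ends Z - X) ends b b'"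
    unfolding same_component_def using is_path_mono[OF p] by iprover
  then have "k_equiv k V (F - cut_edges F ends Z - X) ends b b'"
    using sep \<open>b \<in> A \<inter> Z\<close> \<open>b' \<in> A \<inter> Z\<close> unfolding k_perfectly_separates_def by (meson IntI)
  then show ?thesis
  proof (rule k_equiv_mono)
    fix vs es assume q: "is_path V (F - cut_edges F ends Z - X) ends b b' vs es"
    have w': "walk (F - cut_edges F ends Z - X) ends vs es" "hd vs \<in> Z"
      using q \<open>b \<in> A \<inter> Z\<close> by (auto simp: is_path_iff)
    moreover have "cut_edges (F - cut_edges F ends Z - X) ends Z = {}" by (auto simp: cut_edges_def)
    ultimately have "set es \<subseteq> inner_edges ends Z"
      by (rule walk_avoiding_cut_stays_inside)
    moreover have "set es \<subseteq> F - cut_edges F ends Z - X"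
      using walk_edges[OF w'(1)] .
    ultimately show "set es \<subseteq> F - Y" using inner by blast
  qed
qed

lemma perfectly_separates_across_cut:
  assumes "k_perfectly_separates k V (F - cut_edges F ends S) ends X1 (A \<inter> S)"
    and "k_perfectly_separates k V (F - cut_edges F ends S) ends X2 (A \<inter> - S)"
  shows "k_perfectly_separates k V F ends
    (cut_edges F ends S \<union> (X1 \<inter> inner_edges ends S) \<union> (X2 \<inter> inner_edges ends (- S))) A"
    (is "k_perfectly_separates k V F ends ?Y A")
proof -
  have "inner_edges ends S \<inter> inner_edges ends (- S) = {}"
    "cut_edges F ends S \<inter> inner_edges ends S = {}" "cut_edges F ends S \<inter> inner_edges ends (- S) = {}"
    by (auto simp: inner_edges_def cut_edges_def)
  then have inner: "?Y \<inter> inner_edges ends S = X1 \<inter> inner_edges ends S"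
    "?Y \<inter> inner_edges ends (- S) = X2 \<inter> inner_edges ends (- S)"
    by blast+
  show ?thesis
    unfolding k_perfectly_separates_def
  proof (intro ballI impI notI)
    fix b b' assume b: "b \<in> A" "b' \<in> A" and not_equiv: "\<not> k_equiv k V (F - ?Y) ends b b'"
      and conn: "same_component V (F - ?Y) ends b b'"
    have "k_equiv k V (F - ?Y) ends b b'"
    proof (cases "b \<in> S")
      case True
      have "cut_edges F ends S \<subseteq> ?Y" by blast
      then show ?thesis
        using k_equiv_within_side[OF _ inner(1) assms(1) _ b(2) conn] True b(1) by blast
    next
      case False
      have "cut_edges F ends (- S) \<subseteq> ?Y" by auto
      moreover have "k_perfectly_separates k V (F - cut_edges F ends (- S)) ends X2 (A \<inter> - S)"
        using assms(2) by simp
      ultimately show ?thesis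
        using k_equiv_within_side[OF _ inner(2) _ _ b(2) conn] False b(1) by blast
    qed
    with not_equiv show False ..
  qed
qed

lemma perfect_separator_exists:
  fixes V :: "'v set" and E :: "'e set"
  assumes "is_multigraph V E ends" "A \<subseteq> V" "A \<noteq> {}"
  shows "\<exists>X\<subseteq>E. card X \<le> (card A - 1) * (k - 1) \<and> k_perfectly_separates k V E ends X A"
  using assms
proof (induction "card A" arbitrary: A E rule: less_induct)
  case less
  have finV: "finite V" and finE: "finite E" using less.prems(1) by (auto simp: is_multigraph_def)
  have finA: "finite A" using finV less.prems(2) finite_subset by blast
  show ?case
  proof (cases "\<forall>a\<in>A. \<forall>a'\<in>A. k_equiv k V E ends a a'")
    case True
    then have "k_perfectly_separates k V E ends {} A" by (simp add: k_perfectly_separates_def)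
    then show ?thesis by (intro exI[of _ "{}"]) simp
  next
    case False
    then obtain a a' where a: "a \<in> A" "a' \<in> A" "\<not> k_equiv k V E ends a a'" by auto
    obtain S where S: "a \<in> S" "a' \<notin> S" "card (cut_edges E ends S) < k"
      using small_cut_if_not_k_equiv[OF less.prems(1) _ _ a(3)] a(1,2) less.prems(2) by auto
    define C where "C = cut_edges E ends S"
    have mg: "is_multigraph V (E - C) ends" using less.prems(1) by (auto simp: is_multigraph_def)
    have sides: "A \<inter> S \<subseteq> V" "A \<inter> S \<noteq> {}" "card (A \<inter> S) < card A"
      "A \<inter> - S \<subseteq> V" "A \<inter> - S \<noteq> {}" "card (A \<inter> - S) < card A"
      using less.prems(2) a S finA by (auto intro!: psubset_card_mono)
    obtain X1 X2 where X1: "X1 \<subseteq> E - C" "card X1 \<le> (card (A \<inter> S) - 1) * (k - 1)"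
        "k_perfectly_separates k V (E - C) ends X1 (A \<inter> S)"
      and X2: "X2 \<subseteq> E - C" "card X2 \<le> (card (A \<inter> - S) - 1) * (k - 1)"
        "k_perfectly_separates k V (E - C) ends X2 (A \<inter> - S)"
      using less.hyps[OF sides(3) mg sides(1,2)] less.hyps[OF sides(6) mg sides(4,5)] by blast
    define Y where "Y = C \<union> (X1 \<inter> inner_edges ends S) \<union> (X2 \<inter> inner_edges ends (- S))"
    have "Y \<subseteq> E" using X1(1) X2(1) by (auto simp: Y_def C_def cut_edges_def)
    moreover have "card Y \<le> card C + card X1 + card X2"
    proof -
      have "finite X1" "finite X2" using X1(1) X2(1) finE finite_subset by blast+
      then have "card (X1 \<inter> inner_edges ends S) \<le> card X1"
        "card (X2 \<inter> inner_edges ends (- S)) \<le> card X2"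
        by (simp_all add: card_mono)
      then show ?thesis
        unfolding Y_def
        using card_Un_le[of "C \<union> X1 \<inter> inner_edges ends S" "X2 \<inter> inner_edges ends (- S)"]
          card_Un_le[of C "X1 \<inter> inner_edges ends S"]
        by linarith
    qed
    moreover have "card C + card X1 + card X2 \<le> (card A - 1) * (k - 1)"
    proof -
      define m where "m = k - 1"
      have "card A = card (A \<inter> S) + card (A \<inter> - S)"
        using card_Int_Diff[OF finA, of S] by (simp add: Diff_eq)
      then have "(card A - 1) * m = m + (card (A \<inter> S) - 1) * m + (card (A \<inter> - S) - 1) * m"
        using sides(2,5) finA
        by (cases "card (A \<inter> S)"; cases "card (A \<inter> - S)") (auto simp: algebra_simps)
      moreover have "card C \<le> m" using S(3) unfolding C_def m_def by simp
      ultimately show ?thesis using X1(2) X2(2) unfolding m_def by linarith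
    qed
    moreover have "k_perfectly_separates k V E ends Y A"
      unfolding Y_def C_def by (rule perfectly_separates_across_cut[OF X1(3)[unfolded C_def] X2(3)[unfolded C_def]])
    ultimately show ?thesis by (meson order_trans)
  qed
qed

theorem lemma11:
  fixes V :: "'v set" and E :: "'e set" and ends :: "'e \<Rightarrow> 'v \<times> 'v"
    and A :: "'v set" and k :: nat
  assumes "k \<ge> 1"
    and "is_multigraph V E ends"
    and "A \<subseteq> V" and "A \<noteq> {}"
  shows "\<exists>X \<subseteq> E. card X \<le> (card A - 1) * (k - 1) \<and> k_perfectly_separates k V E ends X A"
  using perfect_separator_exists[OF assms(2-4)] .

end
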